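(* Let $p$ be an odd prime and $G$ the non-abelian group of order $p^3$ and exponent $p$. Let $W$ be a sequence over $G$ of length $p^3+3p-3$. Then: (i) $W$ has a subsequence of length $p^3$ with central product; (ii) if at least $p^3+p-1$ terms of $W$ (counted with multiplicity) lie in $Z(G)$, then $W$ has a product-one subsequence of length $p^3$; (iii) if at least $p^3+2p-2$ terms of $W$ (counted with multiplicity) lie in some maximal subgroup of $G$, then $W$ has a product-one subsequence of length $p^3$.
   Context: $G = \langle x, y : x^p = y^p = 1,\ [y,x] \text{ central}\rangle$ is the Heisenberg group of order $p^3$ and exponent $p$, with $Z(G)=[G,G]$ of order $p$. A sequence over $G$ is a finite unordered list (multiset) of elements of $G$; a subsequence is a sub-multiset. A sequence $g_1\cdot\dotsc\cdot g_\ell$ has central product if $g_1\cdots g_\ell\in Z(G)$ (independent of ordering). A non-empty sequence is product-one if some ordering of its terms has product $1$. *)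

theory Defs
  imports "HOL-Algebra.Algebra" "HOL-Library.Multiset"
begin

definition list_prod :: "('a, 'b) monoid_scheme \<Rightarrow> 'a list \<Rightarrow> 'a" where
  "list_prod G xs = foldr (\<lambda>x y. x \<otimes>\<^bsub>G\<^esub> y) xs \<one>\<^bsub>G\<^esub>"

definition grp_center :: "('a, 'b) monoid_scheme \<Rightarrow> 'a set" where
  "grp_center G = {z \<in> carrier G. \<forall>x \<in> carrier G. z \<otimes>\<^bsub>G\<^esub> x = x \<otimes>\<^bsub>G\<^esub> z}"

text \<open>Sequences over G are multisets of elements of the carrier.\<close>
definition has_central_product :: "('a, 'b) monoid_scheme \<Rightarrow> 'a multiset \<Rightarrow> bool" where
  "has_central_product G S \<longleftrightarrow> (\<exists>xs. mset xs = S \<and> list_prod G xs \<in> grp_center G)"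

definition product_one :: "('a, 'b) monoid_scheme \<Rightarrow> 'a multiset \<Rightarrow> bool" where
  "product_one G S \<longleftrightarrow> S \<noteq> {#} \<and> (\<exists>xs. mset xs = S \<and> list_prod G xs = \<one>\<^bsub>G\<^esub>)"

definition maximal_subgroup :: "'a set \<Rightarrow> ('a, 'b) monoid_scheme \<Rightarrow> bool" where
  "maximal_subgroup H G \<longleftrightarrow> subgroup H G \<and> H \<noteq> carrier G \<and>
     (\<forall>K. subgroup K G \<and> H \<subseteq> K \<longrightarrow> K = H \<or> K = carrier G)"

definition terms_in :: "'a multiset \<Rightarrow> 'a set \<Rightarrow> nat" where
  "terms_in S A = size (filter_mset (\<lambda>x. x \<in> A) S)"

end

theory Submission
  imports Defs "HOL-Number_Theory.Number_Theory" "HOL-Library.Sublist"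
begin

text \<open>Every element of \<open>G\<close> has a normal form \<open>x\<^sup>i y\<^sup>j c\<close> with \<open>i, j < p\<close> and \<open>c\<close> central, and
  since commutators are central, multiplying normal forms adds the exponents modulo the centre.
  So a product is central iff both exponent sums vanish modulo \<open>p\<close>, and part (i) becomes a
  zero-sum problem in \<open>(\<int>/p)\<^sup>2\<close>. Likewise (ii) is a zero-sum problem in \<open>Z \<cong> \<int>/p\<close>, and (iii) one in
  the abelian group \<open>\<langle>a\<rangle>Z \<cong> (\<int>/p)\<^sup>2\<close>, which is what a maximal subgroup turns out to be.

  The zero-sum statements are proved by the polynomial method: an alternating sum over all
  subsequences of a polynomial in the coordinate sums and the length vanishes once the length
  exceeds the degree. Taking Fermat weights \<open>1 - s\<^sup>p\<^sup>-\<^sup>1\<close> for the coordinate sums and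
  \<open>(\<ell> - 1 choose p\<^sup>n - 1)\<close> for the length \<open>\<ell>\<close>, which modulo \<open>p\<close> detects \<open>\<ell> = p\<^sup>n\<close> for \<open>0 < \<ell> < 2p\<^sup>n\<close>,
  the empty subsequence contributes a unit, so some other term is nonzero modulo \<open>p\<close>.\<close>

section \<open>Finite differences and alternating subsequence sums\<close>

text \<open>\<open>fdiff_zero n f\<close>: the \<open>n\<close>-th forward difference of \<open>f\<close> vanishes, i.e. \<open>f\<close> is a
  polynomial of degree \<open>< n\<close>.\<close>
fun fdiff_zero :: "nat \<Rightarrow> (nat \<Rightarrow> int) \<Rightarrow> bool" where
  "fdiff_zero 0 f \<longleftrightarrow> (\<forall>x. f x = 0)"
| "fdiff_zero (Suc n) f \<longleftrightarrow> fdiff_zero n (\<lambda>x. f (Suc x) - f x)"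

lemma fdiff_zero_const_zero: "fdiff_zero n (\<lambda>_. 0)"
  by (induction n) auto

lemma fdiff_zero_add: "fdiff_zero n f \<Longrightarrow> fdiff_zero n g \<Longrightarrow> fdiff_zero n (\<lambda>x. f x + g x)"
proof (induction n arbitrary: f g)
  case (Suc n)
  have "fdiff_zero n (\<lambda>x. (f (Suc x) - f x) + (g (Suc x) - g x))"
    using Suc by simp
  then show ?case by (simp add: algebra_simps)
qed simp

lemma fdiff_zero_cmult: "fdiff_zero n f \<Longrightarrow> fdiff_zero n (\<lambda>x. c * f x)"
proof (induction n arbitrary: f)
  case (Suc n)
  have "fdiff_zero n (\<lambda>x. c * (f (Suc x) - f x))"
    using Suc by simp
  then show ?case by (simp add: algebra_simps)
qed simp

lemma fdiff_zero_shift: "fdiff_zero n f \<Longrightarrow> fdiff_zero n (\<lambda>x. f (x + s))"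
  by (induction n arbitrary: f) auto

lemma fdiff_zero_Suc: "fdiff_zero n f \<Longrightarrow> fdiff_zero (Suc n) f"
proof (induction n arbitrary: f)
  case (Suc n)
  then show ?case by (metis fdiff_zero.simps(2))
qed simp

lemma fdiff_zero_mono:
  assumes "fdiff_zero n f" and "n \<le> m"
  shows "fdiff_zero m f"
  using assms(2) by (induction m rule: dec_induct) (use assms(1) fdiff_zero_Suc in auto)

lemma fdiff_zero_sum:
  "finite I \<Longrightarrow> (\<And>i. i \<in> I \<Longrightarrow> fdiff_zero n (F i)) \<Longrightarrow> fdiff_zero n (\<lambda>x. \<Sum>i\<in>I. F i x)"
  by (induction I rule: finite_induct) (auto intro: fdiff_zero_add fdiff_zero_const_zero)

lemma fdiff_zero_diff:
  assumes "fdiff_zero (Suc n) f"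
  shows "fdiff_zero n (\<lambda>x. f (x + s) - f x)"
proof -
  have telescope: "f (x + s) - f x = (\<Sum>i<s. f (Suc (x + i)) - f (x + i))" for x
    by (induction s) auto
  have "fdiff_zero n (\<lambda>x. \<Sum>i<s. f (Suc (x + i)) - f (x + i))"
    using assms by (intro fdiff_zero_sum) (auto dest: fdiff_zero_shift)
  then show ?thesis by (simp add: telescope)
qed

lemma fdiff_zero_power: "fdiff_zero (Suc k) (\<lambda>x. int x ^ k)"
proof (induction k rule: less_induct)
  case (less k)
  have binomial: "(1 + int x) ^ k - int x ^ k = (\<Sum>i<k. of_nat (k choose i) * int x ^ i)" for x
  proof -
    have "(1 + int x) ^ k = (\<Sum>i\<le>k. of_nat (k choose i) * int x ^ i)"
      using binomial_ring[of "int x" 1 k] by (simp add: add.commute)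
    also have "\<dots> = (\<Sum>i<k. of_nat (k choose i) * int x ^ i) + int x ^ k"
      by (simp add: lessThan_Suc_atMost[symmetric])
    finally show ?thesis by simp
  qed
  have "fdiff_zero k (\<lambda>x. of_nat (k choose i) * int x ^ i)" if "i < k" for i
    using fdiff_zero_mono[OF fdiff_zero_cmult[OF less[OF that]]] that by simp
  then have "fdiff_zero k (\<lambda>x. \<Sum>i<k. of_nat (k choose i) * int x ^ i)"
    by (intro fdiff_zero_sum) auto
  then show ?case by (simp add: binomial)
qed

text \<open>The polynomial \<open>(c - 1 choose k)\<close> in \<open>c\<close>; its value at \<open>c = 0\<close> is \<open>(-1 choose k) = (-1)^k\<close>.\<close>
definition binom_pred :: "nat \<Rightarrow> nat \<Rightarrow> int" where
  "binom_pred k c = (if c = 0 then (-1) ^ k else int ((c - 1) choose k))"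

lemma binom_pred_diff: "binom_pred (Suc k) (Suc c) - binom_pred (Suc k) c = binom_pred k c"
  by (cases c) (auto simp: binom_pred_def)

lemma fdiff_zero_binom_pred: "fdiff_zero (Suc k) (binom_pred k)"
proof (induction k)
  case 0
  have "binom_pred 0 = (\<lambda>_. 1)" by (auto simp: binom_pred_def)
  then show ?case by simp
next
  case (Suc k)
  then show ?case by (simp add: binom_pred_diff)
qed

definition alt_subseq_sum ::
  "('x \<Rightarrow> nat) \<Rightarrow> ('x \<Rightarrow> nat) \<Rightarrow> 'x list \<Rightarrow> (nat \<Rightarrow> nat \<Rightarrow> nat \<Rightarrow> int) \<Rightarrow> int" where
  "alt_subseq_sum f g xs F = (\<Sum>zs\<leftarrow>subseqs xs.
     (-1) ^ length zs * F (sum_list (map f zs)) (sum_list (map g zs)) (length zs))"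

lemma alt_subseq_sum_Nil: "alt_subseq_sum f g [] F = F 0 0 0"
  by (simp add: alt_subseq_sum_def)

lemma alt_subseq_sum_Cons:
  "alt_subseq_sum f g (x # xs) F
     = alt_subseq_sum f g xs F - alt_subseq_sum f g xs (\<lambda>a b c. F (a + f x) (b + g x) (Suc c))"
  by (simp add: alt_subseq_sum_def Let_def sum_list_subtractf uminus_sum_list_map o_def add.commute)

lemma alt_subseq_sum_add:
  "alt_subseq_sum f g xs (\<lambda>a b c. F a b c + H a b c) = alt_subseq_sum f g xs F + alt_subseq_sum f g xs H"
  by (simp add: alt_subseq_sum_def distrib_left sum_list_addf)

lemma alt_subseq_sum_diff:
  "alt_subseq_sum f g xs (\<lambda>a b c. F a b c - H a b c) = alt_subseq_sum f g xs F - alt_subseq_sum f g xs H"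
  by (simp add: alt_subseq_sum_def right_diff_distrib sum_list_subtractf)

lemma alt_subseq_sum_product_vanishes:
  assumes "fdiff_zero i A" and "fdiff_zero j B" and "fdiff_zero k C" and "i + j + k \<le> length xs + 2"
  shows "alt_subseq_sum f g xs (\<lambda>a b c. A a * B b * C c) = 0"
  using assms
proof (induction xs arbitrary: i j k A B C)
  case Nil
  then have "i = 0 \<or> j = 0 \<or> k = 0" by auto
  then show ?case using Nil by (auto simp: alt_subseq_sum_Nil)
next
  case (Cons x xs)
  show ?case
  proof (cases "i = 0 \<or> j = 0 \<or> k = 0")
    case True
    then show ?thesis using Cons.prems by (auto simp: alt_subseq_sum_def)
  next
    case False
    then obtain i' j' k' where ijk: "i = Suc i'" "j = Suc j'" "k = Suc k'"
      by (metis not0_implies_Suc)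
    let ?dA = "\<lambda>a. A (a + f x) - A a" and ?dB = "\<lambda>b. B (b + g x) - B b" and ?dC = "\<lambda>c. C (Suc c) - C c"
    have A: "fdiff_zero i' ?dA" and B: "fdiff_zero j' ?dB" and C: "fdiff_zero k' ?dC"
      using Cons.prems ijk fdiff_zero_diff by auto
    have B': "fdiff_zero j (\<lambda>b. B (b + g x))" and C': "fdiff_zero k (\<lambda>c. C (Suc c))"
      using Cons.prems fdiff_zero_shift[of k C 1] by (auto intro: fdiff_zero_shift)
    have "alt_subseq_sum f g xs (\<lambda>a b c. ?dA a * B (b + g x) * C (Suc c)) = 0"
      by (rule Cons.IH[OF A B' C']) (use Cons.prems ijk in simp)
    moreover have "alt_subseq_sum f g xs (\<lambda>a b c. A a * ?dB b * C (Suc c)) = 0"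
      by (rule Cons.IH[OF Cons.prems(1) B C']) (use Cons.prems ijk in simp)
    moreover have "alt_subseq_sum f g xs (\<lambda>a b c. A a * B b * ?dC c) = 0"
      by (rule Cons.IH[OF Cons.prems(1,2) C]) (use Cons.prems ijk in simp)
    moreover have "(\<lambda>a b c. A (a + f x) * B (b + g x) * C (Suc c) - A a * B b * C c)
        = (\<lambda>a b c. ?dA a * B (b + g x) * C (Suc c) + A a * ?dB b * C (Suc c) + A a * B b * ?dC c)"
      by (intro ext) (simp add: algebra_simps)
    moreover have "alt_subseq_sum f g (x # xs) (\<lambda>a b c. A a * B b * C c)
        = - alt_subseq_sum f g xs (\<lambda>a b c. A (a + f x) * B (b + g x) * C (Suc c) - A a * B b * C c)"
      by (simp add: alt_subseq_sum_Cons alt_subseq_sum_diff)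
    ultimately show ?thesis
      by (simp only: alt_subseq_sum_add)
  qed
qed

section \<open>Zero-sum subsequences\<close>

lemma prime_dvd_choose_prime_power:
  assumes "Factorial_Ring.prime (p::nat)" and "0 < k" and "k < p ^ n"
  shows "p dvd (p ^ n choose k)"
proof (rule ccontr)
  assume "\<not> p dvd (p ^ n choose k)"
  then have "coprime (p ^ n) (p ^ n choose k)"
    using assms(1) by (simp add: prime_imp_coprime)
  moreover have "p ^ n dvd k * (p ^ n choose k)"
    using times_binomial_minus1_eq[of k "p ^ n"] assms(2) by simp
  ultimately have "p ^ n dvd k"
    using coprime_dvd_mult_left_iff by blast
  then show False
    using assms(2,3) dvd_imp_le by fastforce
qed

lemma binom_pred_prime_power_dvd:
  assumes p: "Factorial_Ring.prime (p::nat)" and c: "1 \<le> c" "c \<noteq> p ^ n" "c < 2 * p ^ n"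
  shows "int p dvd binom_pred (p ^ n - 1) c"
proof (cases "c - 1 < p ^ n - 1")
  case True
  then show ?thesis using c by (simp add: binom_pred_def binomial_eq_0)
next
  case False
  have pn: "p ^ n \<ge> 1"
    using p by (simp add: prime_gt_0_nat Suc_leI)
  define r where "r = c - 1 - p ^ n"
  have r: "r < p ^ n - 1" "c - 1 = p ^ n + r"
    using False c pn unfolding r_def by auto
  have "p dvd (\<Sum>k\<le>p ^ n - 1. (p ^ n choose k) * (r choose (p ^ n - 1 - k)))"
  proof (rule dvd_sum)
    fix k assume "k \<in> {..p ^ n - 1}"
    then show "p dvd (p ^ n choose k) * (r choose (p ^ n - 1 - k))"
      using r pn prime_dvd_choose_prime_power[OF p, of k n]
      by (cases "k = 0") (auto simp: binomial_eq_0)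
  qed
  then have "p dvd ((c - 1) choose (p ^ n - 1))"
    by (metis r(2) vandermonde)
  then show ?thesis
    using c by (simp add: binom_pred_def)
qed

text \<open>By Fermat, \<open>zero_mod_indicator p a\<close> is \<open>1\<close> modulo \<open>p\<close> if \<open>p\<close> divides \<open>a\<close>, and \<open>0\<close> otherwise.\<close>
definition zero_mod_indicator :: "nat \<Rightarrow> nat \<Rightarrow> int" where
  "zero_mod_indicator p a = 1 - int a ^ (p - 1)"

lemma fdiff_zero_zero_mod_indicator:
  assumes "p \<ge> 1"
  shows "fdiff_zero p (zero_mod_indicator p)"
proof -
  have "fdiff_zero p (\<lambda>_. 1)"
    using fdiff_zero_mono[of 1 "\<lambda>_. 1" p] assms by simp
  moreover have "fdiff_zero p (\<lambda>a. - (int a ^ (p - 1)))"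
    using fdiff_zero_cmult[OF fdiff_zero_power[of "p - 1"], of "-1"] assms by simp
  ultimately show ?thesis
    using fdiff_zero_add unfolding zero_mod_indicator_def by fastforce
qed

lemma zero_mod_indicator_0: "p \<ge> 2 \<Longrightarrow> zero_mod_indicator p 0 = 1"
  by (simp add: zero_mod_indicator_def)

lemma dvd_of_not_dvd_zero_mod_indicator:
  assumes "Factorial_Ring.prime (p::nat)" and "\<not> int p dvd zero_mod_indicator p a"
  shows "p dvd a"
proof (rule ccontr)
  assume "\<not> p dvd a"
  then have "[a ^ (p - 1) = 1] (mod p)"
    using fermat_theorem[OF assms(1)] by blast
  then have "int p dvd int a ^ (p - 1) - 1"
    by (metis cong_iff_dvd_diff cong_int_iff of_nat_1 of_nat_power)
  then show False
    using assms(2) by (metis dvd_minus_iff minus_diff_eq zero_mod_indicator_def)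
qed

lemma sum_subseqs_split_Nil:
  fixes u :: "'a list \<Rightarrow> 'b::comm_monoid_add"
  shows "(\<Sum>zs\<leftarrow>subseqs xs. u zs) = u [] + (\<Sum>zs\<leftarrow>filter (\<lambda>zs. zs \<noteq> []) (subseqs xs). u zs)"
proof (induction xs)
  case (Cons x xs)
  have "filter (\<lambda>zs. zs \<noteq> []) (map ((#) x) (subseqs xs)) = map ((#) x) (subseqs xs)"
    by (simp add: filter_id_conv)
  then show ?case
    using Cons by (simp add: Let_def add_ac)
qed simp

lemma exists_subseq_not_dvd:
  fixes u :: "'x list \<Rightarrow> int"
  assumes "(\<Sum>zs\<leftarrow>subseqs xs. u zs) = 0" and "\<not> m dvd u []"
  shows "\<exists>zs. subseq zs xs \<and> zs \<noteq> [] \<and> \<not> m dvd u zs"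
proof (rule ccontr)
  assume "\<not> ?thesis"
  then have "\<forall>zs\<in>set (filter (\<lambda>zs. zs \<noteq> []) (subseqs xs)). m dvd u zs"
    by auto
  moreover have "m dvd (\<Sum>zs\<leftarrow>L. u zs)" if "\<forall>zs\<in>set L. m dvd u zs" for L
    using that by (induction L) auto
  ultimately have "m dvd (\<Sum>zs\<leftarrow>filter (\<lambda>zs. zs \<noteq> []) (subseqs xs). u zs)"
    by blast
  then show False
    using assms sum_subseqs_split_Nil[of u xs] by (metis add_0 dvd_0_right dvd_add_left_iff)
qed

lemma exists_subseq_weight_not_dvd:
  fixes f g :: "'x \<Rightarrow> nat"
  assumes p: "Factorial_Ring.prime p"
    and A: "fdiff_zero (Suc i) A" and B: "fdiff_zero (Suc j) B"
    and len: "i + j + p ^ n \<le> length xs" "length xs < 2 * p ^ n"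
    and AB0: "\<not> int p dvd A 0 * B 0"
  shows "\<exists>zs. subseq zs xs \<and> length zs = p ^ n \<and>
    \<not> int p dvd A (sum_list (map f zs)) * B (sum_list (map g zs))"
proof -
  let ?C = "binom_pred (p ^ n - 1)"
  let ?w = "\<lambda>zs. (-1) ^ length zs * (A (sum_list (map f zs)) * B (sum_list (map g zs)) * ?C (length zs))"
  have pn: "p ^ n \<ge> 1"
    using p by (simp add: prime_gt_0_nat Suc_leI)
  have "alt_subseq_sum f g xs (\<lambda>a b c. A a * B b * ?C c) = 0"
    by (rule alt_subseq_sum_product_vanishes[OF A B fdiff_zero_binom_pred]) (use len pn in simp)
  then have "(\<Sum>zs\<leftarrow>subseqs xs. ?w zs) = 0"
    by (simp add: alt_subseq_sum_def)
  moreover have "\<not> int p dvd ?w []"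
    using AB0 by (simp add: binom_pred_def minus_one_power_iff)
  ultimately obtain zs where zs: "subseq zs xs" "zs \<noteq> []" "\<not> int p dvd ?w zs"
    using exists_subseq_not_dvd by blast
  then have "\<not> int p dvd ?C (length zs)"
    by auto
  moreover have "1 \<le> length zs" "length zs < 2 * p ^ n"
    using zs(1,2) len(2) list_emb_length[OF zs(1)] by (auto simp: Suc_le_eq)
  ultimately have "length zs = p ^ n"
    using binom_pred_prime_power_dvd[OF p] by blast
  moreover have "\<not> int p dvd A (sum_list (map f zs)) * B (sum_list (map g zs))"
    using zs(3) by auto
  ultimately show ?thesis
    using zs(1) by blast
qed

lemma sum_list_map_eq_sum_mset: "sum_list (map f xs) = (\<Sum>x\<in>#mset xs. f x)"
  by (induction xs) auto

lemma mset_subseteq_of_subseq: "subseq xs ys \<Longrightarrow> mset xs \<subseteq># mset ys"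
  by (induction rule: list_emb.induct)
    (auto, metis add_mset_add_single mset_subset_eq_add_left subset_mset.order_trans)

lemma exists_submset_weight_not_dvd:
  fixes f g :: "'x \<Rightarrow> nat"
  assumes p: "Factorial_Ring.prime p"
    and A: "fdiff_zero (Suc i) A" and B: "fdiff_zero (Suc j) B"
    and size: "i + j + p ^ n \<le> size S" "i + j < p ^ n"
    and AB0: "\<not> int p dvd A 0 * B 0"
  shows "\<exists>T. T \<subseteq># S \<and> size T = p ^ n \<and> \<not> int p dvd A (\<Sum>x\<in>#T. f x) * B (\<Sum>x\<in>#T. g x)"
proof -
  obtain ys where ys: "mset ys = S"
    using ex_mset by blast
  define xs where "xs = take (i + j + p ^ n) ys"
  have xs: "subseq xs ys"
    unfolding xs_def by (rule prefix_imp_subseq[OF take_is_prefix])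
  obtain zs where zs: "subseq zs xs" "length zs = p ^ n"
    "\<not> int p dvd A (sum_list (map f zs)) * B (sum_list (map g zs))"
    using exists_subseq_weight_not_dvd[OF p A B, where xs = xs and f = f and g = g and n = n] size ys AB0
    by (auto simp: xs_def)
  have "mset zs \<subseteq># S"
    using mset_subseteq_of_subseq[OF subseq_order.trans[OF zs(1) xs]] ys by simp
  then show ?thesis
    using zs(2,3) by (intro exI[of _ "mset zs"]) (simp add: sum_list_map_eq_sum_mset)
qed

text \<open>A version of the Erd\<H>os--Ginzburg--Ziv theorem for \<open>\<int>/p\<close> and block length \<open>p^n\<close>.\<close>
lemma zero_sum_submset:
  fixes f :: "'x \<Rightarrow> nat"
  assumes "Factorial_Ring.prime p" and "n \<ge> 1" and "p ^ n + p - 1 \<le> size S"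
  shows "\<exists>T. T \<subseteq># S \<and> size T = p ^ n \<and> p dvd (\<Sum>x\<in>#T. f x)"
proof -
  have p: "p \<ge> 2"
    using assms(1) prime_ge_2_nat by blast
  have A: "fdiff_zero (Suc (p - 1)) (zero_mod_indicator p)"
    using fdiff_zero_zero_mod_indicator[of p] p by simp
  have B: "fdiff_zero (Suc 0) (\<lambda>_. 1)"
    by simp
  have "p - 1 + 0 < p ^ n"
    using power_increasing[of 1 n p] assms(2) p by simp
  moreover have "p - 1 + 0 + p ^ n \<le> size S"
    using assms(3) p by simp
  moreover have "\<not> int p dvd zero_mod_indicator p 0 * 1"
    using p by (simp add: zero_mod_indicator_0)
  ultimately obtain T where "T \<subseteq># S" "size T = p ^ n"
    "\<not> int p dvd zero_mod_indicator p (\<Sum>x\<in>#T. f x) * 1"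
    using exists_submset_weight_not_dvd[OF assms(1) A B, where f = f] by blast
  then show ?thesis
    using dvd_of_not_dvd_zero_mod_indicator[OF assms(1)] by auto
qed

lemma zero_sum_submset_pair:
  fixes f g :: "'x \<Rightarrow> nat"
  assumes "Factorial_Ring.prime p" and "n \<ge> 2" and "p ^ n + 2 * p - 2 \<le> size S"
  shows "\<exists>T. T \<subseteq># S \<and> size T = p ^ n \<and> p dvd (\<Sum>x\<in>#T. f x) \<and> p dvd (\<Sum>x\<in>#T. g x)"
proof -
  have p: "p \<ge> 2"
    using assms(1) prime_ge_2_nat by blast
  have A: "fdiff_zero (Suc (p - 1)) (zero_mod_indicator p)"
    using fdiff_zero_zero_mod_indicator[of p] p by simp
  have "p ^ 2 \<le> p ^ n"
    using assms(2) p by (simp add: power_increasing)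
  moreover have "2 * p \<le> p ^ 2"
    using p by (simp add: power2_eq_square)
  ultimately have "p - 1 + (p - 1) < p ^ n"
    using p by linarith
  moreover have "p - 1 + (p - 1) + p ^ n \<le> size S"
    using assms(3) p by simp
  moreover have "\<not> int p dvd zero_mod_indicator p 0 * zero_mod_indicator p 0"
    using p by (simp add: zero_mod_indicator_0)
  ultimately obtain T where "T \<subseteq># S" "size T = p ^ n"
    "\<not> int p dvd zero_mod_indicator p (\<Sum>x\<in>#T. f x) * zero_mod_indicator p (\<Sum>x\<in>#T. g x)"
    using exists_submset_weight_not_dvd[OF assms(1) A A, where f = f and g = g] by blast
  then show ?thesis
    using dvd_of_not_dvd_zero_mod_indicator[OF assms(1)] by (meson dvd_mult dvd_mult2)
qed

section \<open>Non-abelian groups of order \<open>p\<^sup>3\<close> and exponent \<open>p\<close>\<close>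

lemma eq_of_dvd_diff: "i < m \<Longrightarrow> j < m \<Longrightarrow> int m dvd (int i - int j) \<Longrightarrow> i = j"
  by (metis cong_iff_dvd_diff cong_int_iff cong_less_modulus_unique_nat)

context group
begin

lemma inv_mult_cancel_left [simp]: "x \<in> carrier G \<Longrightarrow> y \<in> carrier G \<Longrightarrow> inv x \<otimes> (x \<otimes> y) = y"
  by (simp add: m_assoc[symmetric])

lemma mult_inv_cancel_left [simp]: "x \<in> carrier G \<Longrightarrow> y \<in> carrier G \<Longrightarrow> x \<otimes> (inv x \<otimes> y) = y"
  by (simp add: m_assoc[symmetric])

lemma center_subset: "grp_center G \<subseteq> carrier G"
  by (auto simp: grp_center_def)

lemma center_commute: "z \<in> grp_center G \<Longrightarrow> x \<in> carrier G \<Longrightarrow> z \<otimes> x = x \<otimes> z"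
  by (auto simp: grp_center_def)

lemma center_left_commute:
  "z \<in> grp_center G \<Longrightarrow> x \<in> carrier G \<Longrightarrow> y \<in> carrier G \<Longrightarrow> z \<otimes> (x \<otimes> y) = x \<otimes> (z \<otimes> y)"
  using center_commute[of z x] center_subset by (auto simp: m_assoc[symmetric])

lemma nat_pow_commute_self: "x \<in> carrier G \<Longrightarrow> x [^] (n::nat) \<otimes> x = x \<otimes> x [^] n"
  using nat_pow_Suc2[of x n] by simp

lemma commute_inv:
  assumes "a \<in> carrier G" and "x \<in> carrier G" and "a \<otimes> x = x \<otimes> a"
  shows "inv a \<otimes> x = x \<otimes> inv a"
proof -
  have "inv a \<otimes> x = inv a \<otimes> (x \<otimes> a) \<otimes> inv a"
    using assms(1,2) by (simp add: m_assoc)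
  also have "\<dots> = inv a \<otimes> (a \<otimes> x) \<otimes> inv a"
    by (simp only: assms(3))
  also have "\<dots> = x \<otimes> inv a"
    using assms(1,2) by (simp add: m_assoc[symmetric])
  finally show ?thesis .
qed

definition centralizer :: "'a \<Rightarrow> 'a set" where
  "centralizer a = {x \<in> carrier G. x \<otimes> a = a \<otimes> x}"

lemma centralizer_subgroup:
  assumes a: "a \<in> carrier G"
  shows "subgroup (centralizer a) G"
proof (rule subgroupI)
  show "centralizer a \<subseteq> carrier G" "centralizer a \<noteq> {}"
    using a by (auto simp: centralizer_def)
next
  fix x assume "x \<in> centralizer a"
  then have "x \<in> carrier G" "x \<otimes> a = a \<otimes> x"
    by (auto simp: centralizer_def)
  then show "inv x \<in> centralizer a"
    using commute_inv[of x a] a by (simp add: centralizer_def)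
next
  fix x y assume "x \<in> centralizer a" "y \<in> centralizer a"
  then have "x \<in> carrier G" "x \<otimes> a = a \<otimes> x" "y \<in> carrier G" "y \<otimes> a = a \<otimes> y"
    by (auto simp: centralizer_def)
  then have "x \<otimes> y \<otimes> a = a \<otimes> (x \<otimes> y)"
    using a by (metis m_assoc)
  then show "x \<otimes> y \<in> centralizer a"
    using \<open>x \<in> carrier G\<close> \<open>y \<in> carrier G\<close> by (simp add: centralizer_def)
qed

lemma commute_int_pow:
  assumes "a \<in> carrier G" and "b \<in> carrier G" and "b \<otimes> a = a \<otimes> b"
  shows "b [^] (k::int) \<otimes> a = a \<otimes> b [^] k"
proof -
  have "b \<in> centralizer a"
    using assms by (simp add: centralizer_def)
  then have "b [^] k \<in> centralizer a"
    using subgroup_int_pow_closed[OF centralizer_subgroup[OF assms(1)]] by blast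
  then show ?thesis
    by (simp add: centralizer_def)
qed

lemma center_subgroup: "subgroup (grp_center G) G"
proof (rule subgroupI)
  show "grp_center G \<subseteq> carrier G" "grp_center G \<noteq> {}"
    by (auto simp: grp_center_def)
next
  fix a assume a: "a \<in> grp_center G"
  then have c: "a \<in> carrier G"
    using center_subset by auto
  have "inv a \<otimes> x = x \<otimes> inv a" if x: "x \<in> carrier G" for x
    by (rule commute_inv[OF c x center_commute[OF a x]])
  then show "inv a \<in> grp_center G"
    using c unfolding grp_center_def by blast
next
  fix a b assume ab: "a \<in> grp_center G" "b \<in> grp_center G"
  have c: "a \<in> carrier G" "b \<in> carrier G"
    using ab center_subset by auto
  have "a \<otimes> b \<otimes> x = x \<otimes> (a \<otimes> b)" if x: "x \<in> carrier G" for x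
  proof -
    have "a \<otimes> b \<otimes> x = a \<otimes> x \<otimes> b"
      using c x center_commute[OF ab(2) x] by (simp add: m_assoc)
    also have "\<dots> = x \<otimes> (a \<otimes> b)"
      using c x center_commute[OF ab(1) x] by (simp add: m_assoc)
    finally show ?thesis .
  qed
  then show "a \<otimes> b \<in> grp_center G"
    using c unfolding grp_center_def by blast
qed

definition conj_action :: "'a \<Rightarrow> 'a \<Rightarrow> 'a" where
  "conj_action g = (\<lambda>h \<in> carrier G. g \<otimes> h \<otimes> inv g)"

lemma orbit_conj_action: "x \<in> carrier G \<Longrightarrow> orbit G conj_action x = {g \<otimes> x \<otimes> inv g | g. g \<in> carrier G}"
  by (auto simp: orbit_def conj_action_def)

lemma self_mem_orbit_conj_action: "x \<in> carrier G \<Longrightarrow> x \<in> orbit G conj_action x"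
proof -
  assume x: "x \<in> carrier G"
  have "\<one> \<otimes> x \<otimes> inv \<one> \<in> {g \<otimes> x \<otimes> inv g | g. g \<in> carrier G}"
    by blast
  then show ?thesis
    using x by (simp add: orbit_conj_action)
qed

lemma orbit_conj_action_central:
  assumes x: "x \<in> grp_center G"
  shows "orbit G conj_action x = {x}"
proof -
  have xc: "x \<in> carrier G"
    using x center_subset by auto
  have "g \<otimes> x \<otimes> inv g = x" if g: "g \<in> carrier G" for g
  proof -
    have "g \<otimes> x \<otimes> inv g = x \<otimes> g \<otimes> inv g"
      by (simp only: center_commute[OF x g, symmetric])
    also have "\<dots> = x"
      using g xc by (simp add: m_assoc)
    finally show ?thesis .
  qed
  then have "orbit G conj_action x \<subseteq> {x}"
    using xc by (auto simp: orbit_conj_action)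
  then show ?thesis
    using self_mem_orbit_conj_action[OF xc] by blast
qed

lemma orbit_conj_action_noncentral:
  assumes x: "x \<in> carrier G" "x \<notin> grp_center G"
  shows "orbit G conj_action x \<inter> grp_center G = {}"
proof -
  have "g \<otimes> x \<otimes> inv g \<notin> grp_center G" if g: "g \<in> carrier G" for g
  proof
    assume yZ: "g \<otimes> x \<otimes> inv g \<in> grp_center G"
    have "g \<otimes> x = (g \<otimes> x \<otimes> inv g) \<otimes> g"
      using g x by (simp add: m_assoc)
    also have "\<dots> = g \<otimes> (g \<otimes> x \<otimes> inv g)"
      by (rule center_commute[OF yZ g])
    finally have "x = g \<otimes> x \<otimes> inv g"
      using g x by simp
    then show False
      using x(2) yZ by simp
  qed
  then show ?thesis
    using x(1) by (auto simp: orbit_conj_action)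
qed

lemma card_orbit_conj_action_noncentral:
  assumes x: "x \<in> carrier G" "x \<notin> grp_center G"
  shows "card (orbit G conj_action x) \<noteq> 1"
proof
  assume "card (orbit G conj_action x) = 1"
  then obtain y where orbit: "orbit G conj_action x = {y}"
    by (rule card_1_singletonE)
  obtain g where g: "g \<in> carrier G" "g \<otimes> x \<noteq> x \<otimes> g"
    using x by (auto simp: grp_center_def)
  have "x = y"
    using orbit self_mem_orbit_conj_action[OF x(1)] by blast
  moreover have "g \<otimes> x \<otimes> inv g = y"
    using orbit g(1) x(1) by (auto simp: orbit_conj_action)
  ultimately have "g \<otimes> x \<otimes> inv g = x"
    by simp
  then have "g \<otimes> x \<otimes> inv g \<otimes> g = x \<otimes> g"
    by simp
  then show False
    using g x(1) by (simp add: m_assoc)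
qed

end

locale heisenberg = group G for G (structure) +
  fixes p :: nat
  assumes prime_p: "Factorial_Ring.prime p"
    and finite_carrier: "finite (carrier G)"
    and order_G: "order G = p ^ 3"
    and exponent_p: "\<forall>x\<in>carrier G. x [^] p = \<one>"
    and not_comm_group: "\<not> comm_group G"
begin

abbreviation Z :: "'a set" where
  "Z \<equiv> grp_center G"

lemma p_ge_2: "p \<ge> 2"
  using prime_p prime_ge_2_nat by blast

lemma int_pow_mult_p: "x \<in> carrier G \<Longrightarrow> x [^] (int p * q) = \<one>"
  using exponent_p by (simp add: int_pow_pow[symmetric] int_pow_int)

lemma nat_pow_eq_one:
  assumes "x \<in> carrier G" and "p dvd n"
  shows "x [^] (n::nat) = \<one>"
proof -
  obtain q where "n = p * q"
    using assms(2) by blast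
  then show ?thesis
    using assms(1) exponent_p by (simp add: nat_pow_pow[symmetric])
qed

lemma int_pow_eq_nat_pow_lt: "x \<in> carrier G \<Longrightarrow> \<exists>i<p. x [^] (k::int) = x [^] i"
proof (intro exI conjI)
  assume x: "x \<in> carrier G"
  have "x [^] k = x [^] (int p * (k div int p)) \<otimes> x [^] (k mod int p)"
    using int_pow_mult[OF x] by (metis div_mult_mod_eq mult.commute)
  also have "\<dots> = x [^] (nat (k mod int p))"
    using x int_pow_mult_p p_ge_2 by (simp add: int_pow_int[symmetric])
  finally show "x [^] k = x [^] (nat (k mod int p))" .
  show "nat (k mod int p) < p"
    using p_ge_2 by (simp add: nat_less_iff)
qed

lemma mem_powers_of_pow:
  assumes x: "x \<in> carrier G" and k: "\<not> int p dvd k"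
  shows "\<exists>m::int. x = (x [^] k) [^] m"
proof -
  have "coprime (int p) k"
    using prime_p k by (simp add: prime_imp_coprime)
  moreover obtain u v where "u * int p + v * k = gcd (int p) k"
    using bezout_int by blast
  ultimately have "x = x [^] (int p * u + k * v)"
    using x by (simp add: algebra_simps)
  also have "\<dots> = (x [^] k) [^] v"
    using x int_pow_mult_p by (simp add: int_pow_mult int_pow_pow)
  finally show ?thesis by blast
qed

lemma commute_of_commute_pow:
  assumes a: "a \<in> carrier G" and x: "x \<in> carrier G" and k: "\<not> int p dvd k"
    and commute: "x \<otimes> a [^] k = a [^] k \<otimes> x"
  shows "x \<otimes> a = a \<otimes> x"
proof -
  obtain m :: int where m: "a = (a [^] k) [^] m"
    using mem_powers_of_pow[OF a k] by blast
  have "(a [^] k) [^] m \<otimes> x = x \<otimes> (a [^] k) [^] m"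
    using commute_int_pow[of x "a [^] k" m] commute a x by simp
  then show ?thesis
    by (simp only: m[symmetric])
qed

lemma eq_of_pow_diff_mem:
  assumes H: "subgroup H G" and x: "x \<in> carrier G" "x \<notin> H"
    and ij: "i < p" "j < p" and mem: "x [^] (int i - int j) \<in> H"
  shows "i = j"
proof (rule ccontr)
  assume "i \<noteq> j"
  then have "\<not> int p dvd (int i - int j)"
    using ij eq_of_dvd_diff by blast
  then obtain m :: int where "x = (x [^] (int i - int j)) [^] m"
    using mem_powers_of_pow[OF x(1)] by blast
  then show False
    using subgroup_int_pow_closed[OF H mem] x(2) by metis
qed

lemma exists_not_commute: "\<exists>x\<in>carrier G. \<exists>y\<in>carrier G. x \<otimes> y \<noteq> y \<otimes> x"
  using not_comm_group group_comm_groupI by blast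

lemma finite_center: "finite Z"
  using finite_carrier center_subset finite_subset by blast

definition gen_center :: "'a \<Rightarrow> 'a set" where
  "gen_center a = {a [^] (k::int) \<otimes> c | k c. c \<in> Z}"

lemma gen_center_subset: "a \<in> carrier G \<Longrightarrow> gen_center a \<subseteq> carrier G"
  using center_subset by (auto simp: gen_center_def)

lemma gen_center_commute:
  assumes a: "a \<in> carrier G" and "x \<in> gen_center a" "y \<in> gen_center a"
  shows "x \<otimes> y = y \<otimes> x"
proof -
  obtain k c l d where x: "x = a [^] (k::int) \<otimes> c" "c \<in> Z" and y: "y = a [^] (l::int) \<otimes> d" "d \<in> Z"
    using assms(2,3) by (auto simp: gen_center_def)
  have cd: "c \<in> carrier G" "d \<in> carrier G"
    using x(2) y(2) center_subset by auto
  have "x \<otimes> y = a [^] (k + l) \<otimes> (c \<otimes> d)"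
    using a cd center_left_commute[OF x(2), of "a [^] l" d] by (simp add: x y int_pow_mult m_assoc)
  also have "\<dots> = a [^] (l + k) \<otimes> (d \<otimes> c)"
    using center_commute[OF x(2) cd(2)] by (simp add: add.commute)
  also have "\<dots> = y \<otimes> x"
    using a cd center_left_commute[OF y(2), of "a [^] k" c] by (simp add: x y int_pow_mult m_assoc)
  finally show ?thesis .
qed

lemma gen_center_subgroup:
  assumes a: "a \<in> carrier G"
  shows "subgroup (gen_center a) G"
proof (rule subgroupI)
  show "gen_center a \<subseteq> carrier G"
    by (rule gen_center_subset[OF a])
  have "a [^] (0::int) \<otimes> \<one> \<in> gen_center a"
    unfolding gen_center_def using subgroup.one_closed[OF center_subgroup] by blast
  then show "gen_center a \<noteq> {}" by blast
next
  fix x assume "x \<in> gen_center a"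
  then obtain k c where x: "x = a [^] (k::int) \<otimes> c" "c \<in> Z"
    by (auto simp: gen_center_def)
  have "inv x = a [^] (- k) \<otimes> inv c"
    using a x center_subset center_commute[OF subgroup.m_inv_closed[OF center_subgroup x(2)]]
    by (auto simp: inv_mult_group int_pow_neg)
  then show "inv x \<in> gen_center a"
    unfolding gen_center_def using subgroup.m_inv_closed[OF center_subgroup x(2)] by blast
next
  fix x y assume "x \<in> gen_center a" "y \<in> gen_center a"
  then obtain k c l d where x: "x = a [^] (k::int) \<otimes> c" "c \<in> Z" and y: "y = a [^] (l::int) \<otimes> d" "d \<in> Z"
    by (auto simp: gen_center_def)
  have cd: "c \<in> carrier G" "d \<in> carrier G"
    using x(2) y(2) center_subset by auto
  have "x \<otimes> y = a [^] (k + l) \<otimes> (c \<otimes> d)"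
    using a cd center_left_commute[OF x(2), of "a [^] l" d] by (simp add: x y int_pow_mult m_assoc)
  then show "x \<otimes> y \<in> gen_center a"
    unfolding gen_center_def using subgroup.m_closed[OF center_subgroup x(2) y(2)] by blast
qed

lemma int_pow_mem_gen_center:
  assumes "a \<in> carrier G"
  shows "a [^] (k::int) \<in> gen_center a"
proof -
  have "a [^] k \<otimes> \<one> \<in> gen_center a"
    unfolding gen_center_def using subgroup.one_closed[OF center_subgroup] by blast
  then show ?thesis
    using assms by simp
qed

lemma self_mem_gen_center: "a \<in> carrier G \<Longrightarrow> a \<in> gen_center a"
  using int_pow_mem_gen_center[of a 1] by simp

lemma center_subset_gen_center: "a \<in> carrier G \<Longrightarrow> Z \<subseteq> gen_center a"
proof
  fix z assume "a \<in> carrier G" "z \<in> Z"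
  moreover have "a [^] (0::int) \<otimes> z \<in> gen_center a"
    unfolding gen_center_def using \<open>z \<in> Z\<close> by blast
  ultimately show "z \<in> gen_center a"
    using center_subset by auto
qed

lemma card_gen_center_le: "a \<in> carrier G \<Longrightarrow> card (gen_center a) \<le> p * card Z"
proof -
  assume a: "a \<in> carrier G"
  have "gen_center a \<subseteq> (\<lambda>(i, c). a [^] (i::nat) \<otimes> c) ` ({..<p} \<times> Z)"
  proof
    fix x assume "x \<in> gen_center a"
    then obtain k c where x: "x = a [^] (k::int) \<otimes> c" "c \<in> Z"
      by (auto simp: gen_center_def)
    obtain i where "i < p" "a [^] k = a [^] i"
      using int_pow_eq_nat_pow_lt[OF a] by blast
    then show "x \<in> (\<lambda>(i, c). a [^] (i::nat) \<otimes> c) ` ({..<p} \<times> Z)"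
      using x by force
  qed
  then have "card (gen_center a) \<le> card ({..<p} \<times> Z)"
    using finite_center by (meson card_image_le card_mono finite_SigmaI finite_imageI finite_lessThan order_trans)
  then show ?thesis
    by (simp add: card_cartesian_product)
qed

lemma normal_form_inj:
  assumes a: "a \<in> carrier G" "a \<notin> Z" and b: "b \<in> carrier G" "b \<notin> gen_center a"
  shows "inj_on (\<lambda>(i, j, c). a [^] (i::nat) \<otimes> b [^] (j::nat) \<otimes> c) ({..<p} \<times> {..<p} \<times> Z)"
proof (rule inj_onI)
  fix u v assume "u \<in> {..<p} \<times> {..<p} \<times> Z" "v \<in> {..<p} \<times> {..<p} \<times> Z"
    and "(\<lambda>(i, j, c). a [^] (i::nat) \<otimes> b [^] (j::nat) \<otimes> c) u = (\<lambda>(i, j, c). a [^] (i::nat) \<otimes> b [^] (j::nat) \<otimes> c) v"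
  then obtain i j c i' j' c' where uv: "u = (i, j, c)" "v = (i', j', c')"
    and ij: "i < p" "j < p" "i' < p" "j' < p" and c: "c \<in> Z" "c' \<in> Z"
    and eq: "a [^] i \<otimes> b [^] j \<otimes> c = a [^] i' \<otimes> b [^] j' \<otimes> c'"
    by auto
  have cc: "c \<in> carrier G" "c' \<in> carrier G"
    using c center_subset by auto
  define d where "d = c' \<otimes> inv c"
  have d: "d \<in> Z"
    unfolding d_def using c center_subgroup by (simp add: subgroup.m_closed subgroup.m_inv_closed)
  then have dc: "d \<in> carrier G"
    using center_subset by auto
  have key: "a [^] (int i - int i') = b [^] (int j' - int j) \<otimes> d"
  proof -
    have "a [^] (int i - int i') = inv (a [^] i') \<otimes> a [^] i"
      using int_pow_mult[OF a(1), of "- int i'" "int i"] a(1) by (simp add: int_pow_neg_int int_pow_int)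
    also have "\<dots> = inv (a [^] i') \<otimes> (a [^] i \<otimes> b [^] j \<otimes> c) \<otimes> inv (b [^] j \<otimes> c)"
      using a b cc by (simp add: m_assoc inv_mult_group)
    also have "\<dots> = b [^] j' \<otimes> d \<otimes> inv (b [^] j)"
      using a b cc by (simp add: eq m_assoc inv_mult_group d_def)
    also have "\<dots> = b [^] (int j' - int j) \<otimes> d"
      using b dc center_left_commute[OF d, of "inv (b [^] j)" \<one>] center_commute[OF d]
      by (simp add: int_pow_diff int_pow_int m_assoc)
    finally show ?thesis .
  qed
  have "b [^] (int j' - int j) \<in> gen_center a"
  proof -
    have "b [^] (int j' - int j) = a [^] (int i - int i') \<otimes> inv d"
      using key b dc by (simp add: m_assoc)
    then show ?thesis
      using subgroup.m_closed[OF gen_center_subgroup[OF a(1)] int_pow_mem_gen_center[OF a(1)]]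
        subgroup.m_inv_closed[OF center_subgroup d] center_subset_gen_center[OF a(1)] by auto
  qed
  then have jj: "j' = j"
    using eq_of_pow_diff_mem[OF gen_center_subgroup[OF a(1)] b] ij by blast
  then have "a [^] (int i - int i') \<in> Z"
    using key d dc by simp
  then have ii: "i = i'"
    using eq_of_pow_diff_mem[OF center_subgroup a] ij by blast
  show "u = v"
    using eq a b cc by (simp add: uv ii jj m_assoc)
qed

lemma p_dvd_card_orbit_noncentral:
  assumes x: "x \<in> carrier G" "x \<notin> Z"
  shows "p dvd card (orbit G conj_action x)"
proof -
  interpret conj: group_action G "carrier G" conj_action
    unfolding conj_action_def by (rule action_by_conjugation)
  have "card (orbit G conj_action x) * card (stabilizer G conj_action x) = p ^ 3"
    using conj.orbit_stabilizer_theorem[OF x(1)] order_G by simp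
  then obtain k where k: "card (orbit G conj_action x) = p ^ k"
    using divides_primepow_nat[OF prime_p] by (metis dvd_triv_left)
  then have "k \<noteq> 0"
    using card_orbit_conj_action_noncentral[OF x] by auto
  then show ?thesis
    using k by simp
qed

text \<open>The class equation modulo \<open>p\<close>.\<close>
lemma p_dvd_card_center: "p dvd card Z"
proof -
  interpret conj: group_action G "carrier G" conj_action
    unfolding conj_action_def by (rule action_by_conjugation)
  let ?f = "\<lambda>x. if x \<in> Z then 0 else (1::nat)"
  have "p dvd (\<Sum>y\<in>orb. ?f y)" if orb: "orb \<in> orbits G (carrier G) conj_action" for orb
  proof -
    obtain x where x: "x \<in> carrier G" and orbit: "orb = orbit G conj_action x"
      using orb by (auto simp: orbits_def)
    show ?thesis
    proof (cases "x \<in> Z")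
      case True
      then show ?thesis
        using orbit_conj_action_central orbit by simp
    next
      case False
      then have "(\<Sum>y\<in>orb. ?f y) = card orb"
        using orbit_conj_action_noncentral[OF x False] orbit by (simp add: disjoint_iff)
      then show ?thesis
        using p_dvd_card_orbit_noncentral[OF x False] orbit by simp
    qed
  qed
  then have "p dvd (\<Sum>x\<in>carrier G. ?f x)"
    using conj.disjoint_sum[OF finite_carrier, of ?f] by (metis dvd_sum)
  moreover have "(\<Sum>x\<in>carrier G. ?f x) = p ^ 3 - card Z"
    using finite_carrier finite_center center_subset order_G
    by (simp add: sum.If_cases Diff_eq[symmetric] card_Diff_subset order_def Int_absorb1)
  ultimately have "p dvd p ^ 3 - card Z"
    by simp
  moreover have "card Z \<le> p ^ 3"
    using finite_carrier center_subset order_G card_mono by (metis order_def)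
  ultimately show ?thesis
    using dvd_diffD1[of p "p ^ 3" "card Z"] by (simp add: dvd_power)
qed

lemma exists_normal_form_basis: "\<exists>a b. a \<in> carrier G \<and> a \<notin> Z \<and> b \<in> carrier G \<and> b \<notin> gen_center a"
proof -
  obtain a b where ab: "a \<in> carrier G" "b \<in> carrier G" "a \<otimes> b \<noteq> b \<otimes> a"
    using exists_not_commute by blast
  then have "a \<notin> Z"
    using center_commute[of a b] ab by blast
  moreover have "b \<notin> gen_center a"
    using gen_center_commute[OF ab(1) self_mem_gen_center[OF ab(1)], of b] ab(3) by blast
  ultimately show ?thesis
    using ab by blast
qed

lemma card_normal_form:
  assumes "a \<in> carrier G" "a \<notin> Z" "b \<in> carrier G" "b \<notin> gen_center a"
  shows "card ((\<lambda>(i, j, c). a [^] (i::nat) \<otimes> b [^] (j::nat) \<otimes> c) ` ({..<p} \<times> {..<p} \<times> Z)) = p * p * card Z"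
  using card_image[OF normal_form_inj[OF assms]] by (simp add: card_cartesian_product)

lemma card_center: "card Z = p"
proof -
  obtain a b where ab: "a \<in> carrier G" "a \<notin> Z" "b \<in> carrier G" "b \<notin> gen_center a"
    using exists_normal_form_basis by blast
  have "(\<lambda>(i, j, c). a [^] (i::nat) \<otimes> b [^] (j::nat) \<otimes> c) ` ({..<p} \<times> {..<p} \<times> Z) \<subseteq> carrier G"
    using ab center_subset by auto
  from card_mono[OF finite_carrier this] have "p * p * card Z \<le> card (carrier G)"
    by (simp only: card_normal_form[OF ab])
  also have "\<dots> = p * p * p"
    using order_G by (simp add: order_def power3_eq_cube)
  finally have "card Z \<le> p"
    using p_ge_2 by simp
  moreover have "card Z > 0"
    using finite_center subgroup.one_closed[OF center_subgroup] card_gt_0_iff by blast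
  then have "p \<le> card Z"
    using p_dvd_card_center by (simp add: dvd_imp_le)
  ultimately show ?thesis
    by simp
qed

lemma normal_form_exists:
  assumes "a \<in> carrier G" "a \<notin> Z" "b \<in> carrier G" "b \<notin> gen_center a" and g: "g \<in> carrier G"
  shows "\<exists>i<p. \<exists>j<p. \<exists>c\<in>Z. g = a [^] i \<otimes> b [^] j \<otimes> c"
proof -
  let ?F = "(\<lambda>(i, j, c). a [^] (i::nat) \<otimes> b [^] (j::nat) \<otimes> c) ` ({..<p} \<times> {..<p} \<times> Z)"
  have "?F \<subseteq> carrier G"
    using assms center_subset by auto
  moreover have "card ?F = card (carrier G)"
    using order_G card_center card_normal_form[OF assms(1-4)] by (simp add: order_def power3_eq_cube)
  ultimately have "?F = carrier G"
    by (rule card_subset_eq[OF finite_carrier])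
  then obtain t where "t \<in> {..<p} \<times> {..<p} \<times> Z" "g = (\<lambda>(i, j, c). a [^] i \<otimes> b [^] j \<otimes> c) t"
    using g by blast
  then show ?thesis
    by (cases t) auto
qed

lemma commute_imp_mem_gen_center:
  assumes w: "w \<in> carrier G" "w \<notin> Z" and b: "b \<in> carrier G" "b \<otimes> w = w \<otimes> b"
  shows "b \<in> gen_center w"
proof (rule ccontr)
  assume "b \<notin> gen_center w"
  have "carrier G \<subseteq> centralizer w"
  proof
    fix g assume "g \<in> carrier G"
    then obtain i j c where g: "g = w [^] (i::nat) \<otimes> b [^] (j::nat) \<otimes> c" "c \<in> Z"
      using normal_form_exists[OF w b(1) \<open>b \<notin> gen_center w\<close>] by blast
    have S: "subgroup (centralizer w) G"
      by (rule centralizer_subgroup[OF w(1)])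
    have "w \<in> centralizer w" "b \<in> centralizer w" "c \<in> centralizer w"
      using w(1) b center_subset g(2) center_commute[OF g(2) w(1)] unfolding centralizer_def by auto
    then have "w [^] int i \<in> centralizer w" "b [^] int j \<in> centralizer w" "c \<in> centralizer w"
      using subgroup_int_pow_closed[OF S] by blast+
    then show "g \<in> centralizer w"
      using g(1) S by (simp add: subgroup.m_closed int_pow_int)
  qed
  then have "w \<otimes> x = x \<otimes> w" if "x \<in> carrier G" for x
    using that unfolding centralizer_def by auto
  then have "w \<in> Z"
    using w(1) unfolding grp_center_def by blast
  then show False
    using w(2) by simp
qed

definition conj_by :: "'a \<Rightarrow> 'a \<Rightarrow> 'a" where
  "conj_by x g = inv x \<otimes> g \<otimes> x"

lemma conj_by_closed: "x \<in> carrier G \<Longrightarrow> g \<in> carrier G \<Longrightarrow> conj_by x g \<in> carrier G"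
  by (simp add: conj_by_def)

lemma conj_by_mult:
  "x \<in> carrier G \<Longrightarrow> y \<in> carrier G \<Longrightarrow> g \<in> carrier G \<Longrightarrow> conj_by (x \<otimes> y) g = conj_by y (conj_by x g)"
  by (simp add: conj_by_def inv_mult_group m_assoc)

lemma conj_by_inv: "x \<in> carrier G \<Longrightarrow> g \<in> carrier G \<Longrightarrow> conj_by (inv x) (conj_by x g) = g"
  by (simp add: conj_by_def m_assoc)

lemma conj_by_eq_iff_commute:
  assumes "x \<in> carrier G" "g \<in> carrier G"
  shows "conj_by x g = g \<longleftrightarrow> x \<otimes> g = g \<otimes> x"
proof -
  have "conj_by x g = g \<longleftrightarrow> x \<otimes> conj_by x g = x \<otimes> g"
    using assms by (simp add: conj_by_closed)
  also have "\<dots> \<longleftrightarrow> g \<otimes> x = x \<otimes> g"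
    using assms by (simp add: conj_by_def m_assoc)
  finally show ?thesis
    by auto
qed

lemma card_conjugates_le:
  assumes g: "g \<in> carrier G"
  shows "card ((\<lambda>k. conj_by k g) ` carrier G) \<le> p"
proof (cases "g \<in> Z")
  case True
  have "conj_by k g = g" if "k \<in> carrier G" for k
    using conj_by_eq_iff_commute[OF that g] center_commute[OF True that] by simp
  then have "(\<lambda>k. conj_by k g) ` carrier G \<subseteq> {g}"
    by auto
  then have "card ((\<lambda>k. conj_by k g) ` carrier G) \<le> card {g}"
    by (intro card_mono) simp_all
  then show ?thesis
    using p_ge_2 by simp
next
  case False
  obtain h where h: "h \<in> carrier G" "h \<otimes> g \<noteq> g \<otimes> h"
    using False g by (auto simp: grp_center_def)
  have "h \<notin> gen_center g"
    using gen_center_commute[OF g _ self_mem_gen_center[OF g], of h] h(2) by blast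
  note normal_form = normal_form_exists[OF g False h(1) this]
  have "(\<lambda>k. conj_by k g) ` carrier G \<subseteq> (\<lambda>j. conj_by (h [^] (j::nat)) g) ` {..<p}"
  proof
    fix y assume "y \<in> (\<lambda>k. conj_by k g) ` carrier G"
    then obtain k where k: "k \<in> carrier G" "y = conj_by k g"
      by blast
    then obtain i j c where ijc: "j < p" "c \<in> Z" "k = g [^] (i::nat) \<otimes> h [^] (j::nat) \<otimes> c"
      using normal_form by blast
    have c: "c \<in> carrier G"
      using ijc center_subset by auto
    have "conj_by (g [^] i) g = g"
      using conj_by_eq_iff_commute[OF nat_pow_closed[OF g] g] nat_pow_commute_self[OF g] by simp
    then have "y = conj_by c (conj_by (h [^] j) g)"
      using k ijc g h c by (simp add: conj_by_mult)
    also have "\<dots> = conj_by (h [^] j) g"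
      using conj_by_eq_iff_commute[OF c, of "conj_by (h [^] j) g"] center_commute[OF ijc(2), of "conj_by (h [^] j) g"]
        g h by (simp add: conj_by_closed)
    finally show "y \<in> (\<lambda>j. conj_by (h [^] (j::nat)) g) ` {..<p}"
      using ijc by auto
  qed
  then have "card ((\<lambda>k. conj_by k g) ` carrier G) \<le> card ((\<lambda>j. conj_by (h [^] (j::nat)) g) ` {..<p})"
    by (intro card_mono) simp_all
  also have "\<dots> \<le> p"
    using card_image_le[of "{..<p}" "\<lambda>j. conj_by (h [^] j) g"] by simp
  finally show ?thesis .
qed

lemma inj_on_conj_by_powers:
  assumes g: "g \<in> carrier G" and x: "x \<in> carrier G" and nc: "x \<otimes> g \<noteq> g \<otimes> x"
  shows "inj_on (\<lambda>i::nat. conj_by (g [^] i) x) {..<p}"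
proof (rule inj_onI)
  fix i i' :: nat assume i: "i \<in> {..<p}" "i' \<in> {..<p}" and eq: "conj_by (g [^] i) x = conj_by (g [^] i') x"
  have "conj_by (g [^] i \<otimes> inv (g [^] i')) x = x"
    using eq g x by (simp add: conj_by_mult conj_by_inv)
  then have "x \<otimes> g [^] (int i - int i') = g [^] (int i - int i') \<otimes> x"
    using g x conj_by_eq_iff_commute[of "g [^] (int i - int i')" x] by (simp add: int_pow_diff int_pow_int)
  then have "int p dvd (int i - int i')"
    using nc commute_of_commute_pow[OF g x] by blast
  then show "i = i'"
    using i eq_of_dvd_diff by simp
qed

text \<open>Every conjugate \<open>x\<close> of \<open>g\<close> commutes with \<open>g\<close>: otherwise the \<open>p\<close> conjugates
  of \<open>x\<close> by powers of \<open>g\<close> would be distinct and different from \<open>g\<close>, giving \<open>p + 1\<close> conjugates of \<open>g\<close>.\<close>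
lemma conj_by_commute:
  assumes g: "g \<in> carrier G" and h: "h \<in> carrier G"
  shows "conj_by h g \<otimes> g = g \<otimes> conj_by h g"
proof (rule ccontr)
  define x where "x = conj_by h g"
  define K where "K = (\<lambda>k. conj_by k g) ` carrier G"
  assume "\<not> ?thesis"
  then have nc: "x \<otimes> g \<noteq> g \<otimes> x"
    by (simp add: x_def)
  have x: "x \<in> carrier G"
    using g h by (simp add: x_def conj_by_closed)
  let ?y = "\<lambda>i::nat. conj_by (g [^] i) x"
  have y_in: "?y i \<in> K - {g}" for i
  proof
    show "?y i \<in> K"
      using g h by (simp add: K_def x_def conj_by_mult[symmetric])
    have "conj_by (inv (g [^] i)) g = g"
      using g conj_by_eq_iff_commute[of "inv (g [^] i)" g] commute_inv[OF nat_pow_closed[OF g] g nat_pow_commute_self[OF g]]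
      by simp
    moreover have "conj_by (inv (g [^] i)) (?y i) = x"
      by (rule conj_by_inv[OF nat_pow_closed[OF g] x])
    ultimately show "?y i \<notin> {g}"
      using nc by auto
  qed
  have "inj_on ?y {..<p}"
    by (rule inj_on_conj_by_powers[OF g x nc])
  then have "card (?y ` {..<p}) = p"
    by (simp add: card_image)
  moreover have "finite K"
    using finite_carrier by (simp add: K_def)
  moreover have "?y ` {..<p} \<subseteq> K - {g}"
    by (rule image_subsetI) (rule y_in)
  ultimately have "p \<le> card (K - {g})"
    using card_mono[of "K - {g}" "?y ` {..<p}"] by (metis finite_Diff)
  moreover have "g \<in> K"
    unfolding K_def using g by (intro image_eqI[of g _ \<one>]) (simp_all add: conj_by_def)
  then have "card (K - {g}) = card K - 1"
    using \<open>finite K\<close> by (simp add: card_Diff_singleton)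
  moreover have "card K \<le> p"
    unfolding K_def by (rule card_conjugates_le[OF g])
  ultimately show False
    using p_ge_2 by linarith
qed

lemma commutator_in_center:
  assumes g: "g \<in> carrier G" and h: "h \<in> carrier G"
  shows "inv g \<otimes> inv h \<otimes> g \<otimes> h \<in> Z"
proof (rule ccontr)
  define u where "u = inv g \<otimes> inv h \<otimes> g \<otimes> h"
  assume "\<not> ?thesis"
  then have u: "u \<in> carrier G" "u \<notin> Z"
    using g h by (simp_all add: u_def)
  have "inv g \<in> centralizer g" "conj_by h g \<in> centralizer g"
    using g h conj_by_commute[OF g h] by (auto simp: centralizer_def conj_by_closed)
  moreover have "u = inv g \<otimes> conj_by h g"
    using g h by (simp add: u_def conj_by_def m_assoc)
  ultimately have "u \<in> centralizer g"
    using subgroup.m_closed[OF centralizer_subgroup[OF g]] by simp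
  then have "g \<in> gen_center u"
    using commute_imp_mem_gen_center[OF u g] by (simp add: centralizer_def)
  have "conj_by g (inv h) \<otimes> inv h = inv h \<otimes> conj_by g (inv h)"
    using conj_by_commute[of "inv h" g] g h by simp
  then have "inv (inv h) \<otimes> conj_by g (inv h) = conj_by g (inv h) \<otimes> inv (inv h)"
    using g h by (intro commute_inv[OF inv_closed[OF h]]) (simp_all add: conj_by_closed)
  then have "conj_by g (inv h) \<in> centralizer h" "h \<in> centralizer h"
    using g h by (simp_all add: centralizer_def conj_by_closed)
  moreover have "u = conj_by g (inv h) \<otimes> h"
    using g h by (simp add: u_def conj_by_def m_assoc)
  ultimately have "u \<in> centralizer h"
    using subgroup.m_closed[OF centralizer_subgroup[OF h]] by simp
  then have "h \<in> gen_center u"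
    using commute_imp_mem_gen_center[OF u h] by (simp add: centralizer_def)
  then have "g \<otimes> h = h \<otimes> g"
    using gen_center_commute[OF u(1) \<open>g \<in> gen_center u\<close>] by blast
  then have "u = \<one>"
    using g h by (simp add: u_def m_assoc)
  then show False
    using u subgroup.one_closed[OF center_subgroup] by simp
qed

lemma commute_up_to_center:
  assumes a: "a \<in> carrier G" and b: "b \<in> carrier G"
  shows "\<exists>w\<in>Z. b \<otimes> a = a \<otimes> b \<otimes> w"
proof
  show "inv b \<otimes> inv a \<otimes> b \<otimes> a \<in> Z"
    by (rule commutator_in_center[OF b a])
  show "b \<otimes> a = a \<otimes> b \<otimes> (inv b \<otimes> inv a \<otimes> b \<otimes> a)"
    using a b by (simp add: m_assoc)
qed

lemma normal_form_mult:
  assumes x: "x \<in> carrier G" and y: "y \<in> carrier G" and c: "c \<in> Z" "c' \<in> Z"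
  shows "\<exists>d\<in>Z. (x [^] (i::nat) \<otimes> y [^] (j::nat) \<otimes> c) \<otimes> (x [^] (i'::nat) \<otimes> y [^] (j'::nat) \<otimes> c')
      = x [^] (i + i') \<otimes> y [^] (j + j') \<otimes> d"
proof -
  obtain w where w: "w \<in> Z" "y [^] j \<otimes> x [^] i' = x [^] i' \<otimes> y [^] j \<otimes> w"
    using commute_up_to_center x y by blast
  have cc: "c \<in> carrier G" "c' \<in> carrier G" "w \<in> carrier G"
    using c w center_subset by auto
  have "(x [^] i \<otimes> y [^] j \<otimes> c) \<otimes> (x [^] i' \<otimes> y [^] j' \<otimes> c')
      = x [^] i \<otimes> (y [^] j \<otimes> (x [^] i' \<otimes> (y [^] j' \<otimes> (c \<otimes> c'))))"
    using x y cc center_left_commute[OF c(1), of "x [^] i'" "y [^] j' \<otimes> c'"]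
      center_left_commute[OF c(1), of "y [^] j'" c'] by (simp add: m_assoc)
  also have "\<dots> = x [^] i \<otimes> (x [^] i' \<otimes> y [^] j \<otimes> w \<otimes> (y [^] j' \<otimes> (c \<otimes> c')))"
    using x y cc by (simp add: m_assoc[symmetric] w(2))
  also have "\<dots> = x [^] (i + i') \<otimes> y [^] (j + j') \<otimes> (w \<otimes> (c \<otimes> c'))"
    using x y cc center_left_commute[OF w(1), of "y [^] j'" "c \<otimes> c'"] by (simp add: m_assoc nat_pow_mult[symmetric])
  finally show ?thesis
    using w(1) c subgroup.m_closed[OF center_subgroup] by blast
qed

lemma list_prod_normal_form:
  fixes e f :: "'a \<Rightarrow> nat"
  assumes x: "x \<in> carrier G" and y: "y \<in> carrier G"
    and form: "\<forall>g\<in>set gs. \<exists>c\<in>Z. g = x [^] e g \<otimes> y [^] f g \<otimes> c"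
  shows "\<exists>c\<in>Z. list_prod G gs = x [^] sum_list (map e gs) \<otimes> y [^] sum_list (map f gs) \<otimes> c"
  using form
proof (induction gs)
  case Nil
  show ?case
    using x y subgroup.one_closed[OF center_subgroup] by (auto simp: list_prod_def intro!: bexI[of _ \<one>])
next
  case (Cons g gs)
  obtain c where c: "c \<in> Z" "g = x [^] e g \<otimes> y [^] f g \<otimes> c"
    using Cons.prems by auto
  obtain c' where c': "c' \<in> Z" "list_prod G gs = x [^] sum_list (map e gs) \<otimes> y [^] sum_list (map f gs) \<otimes> c'"
    using Cons by auto
  have "list_prod G (g # gs) = g \<otimes> list_prod G gs"
    by (simp add: list_prod_def)
  then show ?case
    using normal_form_mult[OF x y c(1) c'(1), of "e g" "f g" "sum_list (map e gs)" "sum_list (map f gs)"] c c'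
    by simp
qed

lemma list_prod_pow_center:
  fixes e f :: "'a \<Rightarrow> nat"
  assumes a: "a \<in> carrier G" and z: "z \<in> Z"
    and form: "\<forall>g\<in>set gs. g = a [^] e g \<otimes> z [^] f g"
  shows "list_prod G gs = a [^] sum_list (map e gs) \<otimes> z [^] sum_list (map f gs)"
  using form
proof (induction gs)
  case Nil
  then show ?case
    using a z center_subset by (auto simp: list_prod_def)
next
  case (Cons g gs)
  have zc: "z \<in> carrier G"
    using z center_subset by auto
  have zg: "z [^] f g \<in> Z"
    using subgroup_int_pow_closed[OF center_subgroup z, of "int (f g)"] by (simp add: int_pow_int)
  have "list_prod G (g # gs) = a [^] e g \<otimes> z [^] f g \<otimes> (a [^] sum_list (map e gs) \<otimes> z [^] sum_list (map f gs))"
    using Cons by (simp add: list_prod_def)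
  also have "\<dots> = a [^] e g \<otimes> (a [^] sum_list (map e gs) \<otimes> (z [^] f g \<otimes> z [^] sum_list (map f gs)))"
    using a zc center_left_commute[OF zg, of "a [^] sum_list (map e gs)" "z [^] sum_list (map f gs)"]
    by (simp add: m_assoc)
  also have "\<dots> = a [^] sum_list (map e (g # gs)) \<otimes> z [^] sum_list (map f (g # gs))"
    using a zc by (simp add: m_assoc[symmetric] nat_pow_mult)
  finally show ?case .
qed

lemma center_eq_powers: "\<exists>z\<in>Z. Z = (\<lambda>k. z [^] (k::nat)) ` {..<p}"
proof -
  have "\<not> Z \<subseteq> {\<one>}"
    using card_center p_ge_2 card_mono[of "{\<one>}" Z] by auto
  then obtain z where z: "z \<in> Z" "z \<noteq> \<one>"
    by blast
  then have zc: "z \<in> carrier G"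
    using center_subset by auto
  have inj: "inj_on (\<lambda>k. z [^] (k::nat)) {..<p}"
  proof (rule inj_onI)
    fix k k' assume k: "k \<in> {..<p}" "k' \<in> {..<p}" and eq: "z [^] k = z [^] k'"
    have "z [^] (int k - int k') \<in> {\<one>}"
      using zc eq by (simp add: int_pow_diff int_pow_int)
    then show "k = k'"
      using eq_of_pow_diff_mem[OF triv_subgroup zc] z(2) k by auto
  qed
  moreover have "(\<lambda>k. z [^] (k::nat)) ` {..<p} \<subseteq> Z"
    using subgroup_int_pow_closed[OF center_subgroup z(1)] by (auto simp: int_pow_int[symmetric])
  moreover have "card ((\<lambda>k. z [^] (k::nat)) ` {..<p}) = card Z"
    using card_image[OF inj] card_center by simp
  ultimately have "(\<lambda>k. z [^] (k::nat)) ` {..<p} = Z"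
    by (intro card_subset_eq[OF finite_center])
  then show ?thesis
    using z(1) by blast
qed

lemma gen_center_ne_carrier:
  assumes "a \<in> carrier G"
  shows "gen_center a \<noteq> carrier G"
proof
  assume "gen_center a = carrier G"
  then have "p * p * p \<le> p * p"
    using card_gen_center_le[OF assms] card_center order_G by (simp add: order_def power3_eq_cube)
  then show False
    using p_ge_2 by simp
qed

lemma center_subset_subgroup:
  assumes H: "subgroup H G" and u: "u \<in> Z" "u \<in> H" "u \<noteq> \<one>"
  shows "Z \<subseteq> H"
proof -
  obtain z where z: "z \<in> Z" "Z = (\<lambda>k. z [^] (k::nat)) ` {..<p}"
    using center_eq_powers by blast
  have zc: "z \<in> carrier G"
    using z center_subset by auto
  obtain k where k: "k < p" "u = z [^] k"
    using u(1) z(2) by auto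
  have "k \<noteq> 0"
  proof
    assume "k = 0"
    then show False
      using k(2) u(3) by simp
  qed
  then have "\<not> int p dvd int k"
    using k(1) by (auto dest: zdvd_imp_le)
  then obtain m :: int where "z = (z [^] int k) [^] m"
    using mem_powers_of_pow[OF zc] by blast
  then have "z \<in> H"
    using subgroup_int_pow_closed[OF H, of u m] u(2) k(2) by (simp add: int_pow_int)
  then show ?thesis
    using z(2) subgroup_int_pow_closed[OF H] by (auto simp: int_pow_int[symmetric])
qed

lemma proper_subgroup_subset_gen_center:
  assumes H: "subgroup H G" "H \<noteq> carrier G" and a: "a \<in> H" "a \<notin> Z"
  shows "H \<subseteq> gen_center a"
proof
  have ac: "a \<in> carrier G"
    using a(1) H(1) subgroup.subset by blast
  fix b assume b: "b \<in> H"
  have bc: "b \<in> carrier G"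
    using b H(1) subgroup.subset by blast
  show "b \<in> gen_center a"
  proof (rule ccontr)
    assume b_not: "b \<notin> gen_center a"
    let ?u = "inv a \<otimes> inv b \<otimes> a \<otimes> b"
    have "?u \<in> Z"
      by (rule commutator_in_center[OF ac bc])
    moreover have "?u \<in> H"
      using a(1) b H(1) by (simp add: subgroup.m_closed subgroup.m_inv_closed)
    moreover have "?u \<noteq> \<one>"
    proof
      assume "?u = \<one>"
      moreover have "b \<otimes> a \<otimes> ?u = a \<otimes> b"
        using ac bc by (simp add: m_assoc)
      ultimately have "b \<otimes> a = a \<otimes> b"
        using ac bc by simp
      then show False
        using commute_imp_mem_gen_center[OF ac a(2) bc] b_not by blast
    qed
    ultimately have ZH: "Z \<subseteq> H"
      by (rule center_subset_subgroup[OF H(1)])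
    have "carrier G \<subseteq> H"
    proof
      fix g assume "g \<in> carrier G"
      then obtain i j c where g: "g = a [^] (i::nat) \<otimes> b [^] (j::nat) \<otimes> c" "c \<in> Z"
        using normal_form_exists[OF ac a(2) bc b_not] by blast
      have "a [^] int i \<in> H" "b [^] int j \<in> H" "c \<in> H"
        using subgroup_int_pow_closed[OF H(1)] a(1) b g(2) ZH by auto
      then show "g \<in> H"
        using H(1) by (simp add: g(1) subgroup.m_closed int_pow_int)
    qed
    then show False
      using H subgroup.subset by blast
  qed
qed

lemma maximal_subgroup_not_subset_center:
  assumes "maximal_subgroup H G"
  shows "\<not> H \<subseteq> Z"
proof
  assume "H \<subseteq> Z"
  obtain x where x: "x \<in> carrier G" "x \<notin> Z"
    using exists_normal_form_basis by blast
  then have "gen_center x = H \<or> gen_center x = carrier G"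
    using assms gen_center_subgroup[OF x(1)] center_subset_gen_center[OF x(1)] \<open>H \<subseteq> Z\<close>
    unfolding maximal_subgroup_def by blast
  then show False
    using self_mem_gen_center[OF x(1)] x(2) \<open>H \<subseteq> Z\<close> gen_center_ne_carrier[OF x(1)] by blast
qed

lemma maximal_subgroup_eq_gen_center:
  assumes M: "maximal_subgroup H G"
  shows "\<exists>a\<in>H. a \<notin> Z \<and> H = gen_center a"
proof -
  have H: "subgroup H G" "H \<noteq> carrier G"
    using M unfolding maximal_subgroup_def by auto
  obtain a where a: "a \<in> H" "a \<notin> Z"
    using maximal_subgroup_not_subset_center[OF M] by blast
  have ac: "a \<in> carrier G"
    using a(1) H(1) subgroup.subset by blast
  have "gen_center a = H"
    using M proper_subgroup_subset_gen_center[OF H a] gen_center_subgroup[OF ac] gen_center_ne_carrier[OF ac]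
    unfolding maximal_subgroup_def by blast
  then show ?thesis
    using a by blast
qed

lemma gen_center_pow_coordinates:
  assumes a: "a \<in> carrier G" and z: "z \<in> Z" "Z = (\<lambda>k. z [^] (k::nat)) ` {..<p}"
    and g: "g \<in> gen_center a"
  shows "\<exists>i l. g = a [^] (i::nat) \<otimes> z [^] (l::nat)"
proof -
  obtain k c where kc: "g = a [^] (k::int) \<otimes> c" "c \<in> Z"
    using g unfolding gen_center_def by blast
  obtain i where "a [^] k = a [^] (i::nat)"
    using int_pow_eq_nat_pow_lt[OF a] by blast
  moreover obtain l where "c = z [^] (l::nat)"
    using kc(2) z(2) by auto
  ultimately show ?thesis
    using kc(1) by (intro exI[of _ i] exI[of _ l]) simp
qed

lemma central_product_of_exponent_sums:
  fixes e f :: "'a \<Rightarrow> nat"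
  assumes x: "x \<in> carrier G" and y: "y \<in> carrier G"
    and form: "\<forall>g\<in>#T. \<exists>c\<in>Z. g = x [^] e g \<otimes> y [^] f g \<otimes> c"
    and dvd: "p dvd (\<Sum>g\<in>#T. e g)" "p dvd (\<Sum>g\<in>#T. f g)"
  shows "has_central_product G T"
proof -
  obtain gs where gs: "mset gs = T"
    using ex_mset by blast
  have "\<exists>c\<in>Z. list_prod G gs = x [^] sum_list (map e gs) \<otimes> y [^] sum_list (map f gs) \<otimes> c"
    by (rule list_prod_normal_form[OF x y]) (use form gs in auto)
  moreover have "x [^] sum_list (map e gs) = \<one>" "y [^] sum_list (map f gs) = \<one>"
    using nat_pow_eq_one x y dvd gs by (simp_all add: sum_list_map_eq_sum_mset)
  ultimately have "list_prod G gs \<in> Z"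
    using center_subset by auto
  then show ?thesis
    using gs unfolding has_central_product_def by blast
qed

lemma product_one_of_exponent_sums:
  fixes e f :: "'a \<Rightarrow> nat"
  assumes a: "a \<in> carrier G" and z: "z \<in> Z" and T: "T \<noteq> {#}"
    and form: "\<forall>g\<in>#T. g = a [^] e g \<otimes> z [^] f g"
    and dvd: "p dvd (\<Sum>g\<in>#T. e g)" "p dvd (\<Sum>g\<in>#T. f g)"
  shows "product_one G T"
proof -
  obtain gs where gs: "mset gs = T"
    using ex_mset by blast
  then have "list_prod G gs = a [^] sum_list (map e gs) \<otimes> z [^] sum_list (map f gs)"
    using list_prod_pow_center[OF a z] form by auto
  moreover have "a [^] sum_list (map e gs) = \<one>" "z [^] sum_list (map f gs) = \<one>"
    using nat_pow_eq_one a z center_subset dvd gs by (auto simp: sum_list_map_eq_sum_mset)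
  ultimately show ?thesis
    using gs T unfolding product_one_def by auto
qed

lemma central_product_submset:
  assumes W: "set_mset W \<subseteq> carrier G" and size: "p ^ 3 + 2 * p - 2 \<le> size W"
  shows "\<exists>T. T \<subseteq># W \<and> size T = p ^ 3 \<and> has_central_product G T"
proof -
  obtain a b where ab: "a \<in> carrier G" "a \<notin> Z" "b \<in> carrier G" "b \<notin> gen_center a"
    using exists_normal_form_basis by blast
  have "\<forall>g\<in>carrier G. \<exists>t :: nat \<times> nat. \<exists>c\<in>Z. g = a [^] fst t \<otimes> b [^] snd t \<otimes> c"
  proof
    fix g assume "g \<in> carrier G"
    then obtain i j c where "c \<in> Z" "g = a [^] (i::nat) \<otimes> b [^] (j::nat) \<otimes> c"
      using normal_form_exists[OF ab] by blast
    then show "\<exists>t :: nat \<times> nat. \<exists>c\<in>Z. g = a [^] fst t \<otimes> b [^] snd t \<otimes> c"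
      by (intro exI[of _ "(i, j)"]) auto
  qed
  from bchoice[OF this] obtain r :: "'a \<Rightarrow> nat \<times> nat"
    where r: "\<forall>g\<in>carrier G. \<exists>c\<in>Z. g = a [^] fst (r g) \<otimes> b [^] snd (r g) \<otimes> c"
    by blast
  have "\<exists>T. T \<subseteq># W \<and> size T = p ^ 3 \<and> p dvd (\<Sum>g\<in>#T. fst (r g)) \<and> p dvd (\<Sum>g\<in>#T. snd (r g))"
    by (rule zero_sum_submset_pair[OF prime_p _ size]) simp
  then obtain T where T: "T \<subseteq># W" "size T = p ^ 3"
    "p dvd (\<Sum>g\<in>#T. fst (r g))" "p dvd (\<Sum>g\<in>#T. snd (r g))"
    by blast
  have "\<forall>g\<in>#T. \<exists>c\<in>Z. g = a [^] fst (r g) \<otimes> b [^] snd (r g) \<otimes> c"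
  proof
    fix g assume "g \<in># T"
    then have "g \<in> carrier G"
      using W T(1) by (auto dest: mset_subset_eqD)
    then show "\<exists>c\<in>Z. g = a [^] fst (r g) \<otimes> b [^] snd (r g) \<otimes> c"
      using r by blast
  qed
  then have "has_central_product G T"
    by (rule central_product_of_exponent_sums[OF ab(1,3) _ T(3,4)])
  then show ?thesis
    using T(1,2) by blast
qed

lemma product_one_submset_center:
  assumes size: "p ^ 3 + p - 1 \<le> terms_in W Z"
  shows "\<exists>T. T \<subseteq># W \<and> size T = p ^ 3 \<and> product_one G T"
proof -
  define S where "S = filter_mset (\<lambda>x. x \<in> Z) W"
  obtain z where z: "z \<in> Z" "Z = (\<lambda>k. z [^] (k::nat)) ` {..<p}"
    using center_eq_powers by blast
  have "\<forall>g\<in>Z. \<exists>k. g = z [^] (k::nat)"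
    using z(2) by blast
  from bchoice[OF this] obtain r :: "'a \<Rightarrow> nat" where r: "\<forall>g\<in>Z. g = z [^] r g"
    by blast
  have "p ^ 3 + p - 1 \<le> size S"
    using size by (simp add: S_def terms_in_def)
  then have "\<exists>T. T \<subseteq># S \<and> size T = p ^ 3 \<and> p dvd (\<Sum>g\<in>#T. r g)"
    by (rule zero_sum_submset[OF prime_p, rotated]) simp
  then obtain T where T: "T \<subseteq># S" "size T = p ^ 3" "p dvd (\<Sum>g\<in>#T. r g)"
    by blast
  have zc: "z \<in> carrier G"
    using z(1) center_subset by auto
  have form: "\<forall>g\<in>#T. g = z [^] r g \<otimes> z [^] (0::nat)"
  proof
    fix g assume "g \<in># T"
    then have "g = z [^] r g"
      using r set_mset_mono[OF T(1)] unfolding S_def by auto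
    moreover have "z [^] r g \<otimes> z [^] (0::nat) = z [^] r g"
      using zc by simp
    ultimately show "g = z [^] r g \<otimes> z [^] (0::nat)"
      by (rule trans[OF _ sym])
  qed
  have "T \<noteq> {#}"
    using T(2) p_ge_2 by auto
  then have "product_one G T"
    by (rule product_one_of_exponent_sums[OF zc z(1) _ form T(3)]) simp
  moreover have "T \<subseteq># W"
    using T(1) unfolding S_def by (rule subset_mset.order_trans[OF _ multiset_filter_subset])
  ultimately show ?thesis
    using T(2) by blast
qed

lemma product_one_submset_maximal:
  assumes M: "maximal_subgroup H G" and size: "p ^ 3 + 2 * p - 2 \<le> terms_in W H"
  shows "\<exists>T. T \<subseteq># W \<and> size T = p ^ 3 \<and> product_one G T"
proof -
  define S where "S = filter_mset (\<lambda>x. x \<in> H) W"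
  obtain a where a: "a \<in> H" "a \<notin> Z" "H = gen_center a"
    using maximal_subgroup_eq_gen_center[OF M] by blast
  have ac: "a \<in> carrier G"
    using a(1) M subgroup.subset by (auto simp: maximal_subgroup_def)
  obtain z where z: "z \<in> Z" "Z = (\<lambda>k. z [^] (k::nat)) ` {..<p}"
    using center_eq_powers by blast
  have "\<forall>g\<in>H. \<exists>t :: nat \<times> nat. g = a [^] fst t \<otimes> z [^] snd t"
  proof
    fix g assume "g \<in> H"
    then obtain i l where "g = a [^] (i::nat) \<otimes> z [^] (l::nat)"
      using gen_center_pow_coordinates[OF ac z] a(3) by blast
    then show "\<exists>t :: nat \<times> nat. g = a [^] fst t \<otimes> z [^] snd t"
      by (intro exI[of _ "(i, l)"]) simp
  qed
  from bchoice[OF this] obtain r :: "'a \<Rightarrow> nat \<times> nat" where r: "\<forall>g\<in>H. g = a [^] fst (r g) \<otimes> z [^] snd (r g)"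
    by blast
  have "p ^ 3 + 2 * p - 2 \<le> size S"
    using size by (simp add: S_def terms_in_def)
  then have "\<exists>T. T \<subseteq># S \<and> size T = p ^ 3 \<and> p dvd (\<Sum>g\<in>#T. fst (r g)) \<and> p dvd (\<Sum>g\<in>#T. snd (r g))"
    by (rule zero_sum_submset_pair[OF prime_p, rotated]) simp
  then obtain T where T: "T \<subseteq># S" "size T = p ^ 3"
    "p dvd (\<Sum>g\<in>#T. fst (r g))" "p dvd (\<Sum>g\<in>#T. snd (r g))"
    by blast
  have "\<forall>g\<in>#T. g \<in> H"
    using set_mset_mono[OF T(1)] by (auto simp: S_def)
  then have form: "\<forall>g\<in>#T. g = a [^] fst (r g) \<otimes> z [^] snd (r g)"
    using r by blast
  have "T \<noteq> {#}"
    using T(2) p_ge_2 by auto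
  then have "product_one G T"
    by (rule product_one_of_exponent_sums[OF ac z(1) _ form T(3,4)])
  moreover have "T \<subseteq># W"
    using T(1) unfolding S_def by (rule subset_mset.order_trans[OF _ multiset_filter_subset])
  ultimately show ?thesis
    using T(2) by blast
qed

end

theorem lemma2p9:
  fixes G :: "('a, 'b) monoid_scheme" and p :: nat and W :: "'a multiset"
  assumes "Factorial_Ring.prime p" and "odd p"
    and "group G"
    and "finite (carrier G)"
    and "order G = p ^ 3"
    and "\<forall>x \<in> carrier G. x [^]\<^bsub>G\<^esub> p = \<one>\<^bsub>G\<^esub>"
    and "\<not> comm_group G"
    and "set_mset W \<subseteq> carrier G"
    and "size W = p ^ 3 + 3 * p - 3"
  shows "(\<exists>T. T \<subseteq># W \<and> size T = p ^ 3 \<and> has_central_product G T)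
    \<and> (terms_in W (grp_center G) \<ge> p ^ 3 + p - 1 \<longrightarrow>
         (\<exists>T. T \<subseteq># W \<and> size T = p ^ 3 \<and> product_one G T))
    \<and> ((\<exists>H. maximal_subgroup H G \<and> terms_in W H \<ge> p ^ 3 + 2 * p - 2) \<longrightarrow>
         (\<exists>T. T \<subseteq># W \<and> size T = p ^ 3 \<and> product_one G T))"
proof -
  interpret heisenberg G p
    using assms by (simp add: heisenberg_def heisenberg_axioms_def)
  have "p ^ 3 + 2 * p - 2 \<le> size W"
    using assms(9) p_ge_2 by simp
  then show ?thesis
    using central_product_submset[OF assms(8)] product_one_submset_center product_one_submset_maximal
    by blast
qed

end
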